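(* Let $\mathbb{F}$ be a field, $n,d\ge 1$, $X^1,\dots,X^d$ pairwise disjoint sets of variables $X^i=\{x^i_{jk}:j,k\in[n]\}$, $X=\bigcup_i X^i$, $A^i$ the $n\times n$ matrix with $(j,k)$ entry $x^i_{jk}$, and $f$ the $(1,1)$ entry of $A^1A^2\cdots A^d$. Then there exists a bijective partition $B:X\to Y\cup Z$ such that $\mathrm{maxrank}(M_{f^B})=n^{d-1}$.
   Context: $Y$ and $Z$ are disjoint sets of variables, and a bijective partition $B:X\to Y\cup Z$ is a bijection onto $Y\cup Z$; $f^B$ is $f$ with each $x$ replaced by $B(x)$. For $g\in\mathbb{F}[Y,Z]$, the polynomial coefficient matrix $M_g$ has rows indexed by monic multilinear monomials $p$ in $Y$ and columns by monic multilinear monomials $q$ in $Z$, with $M_g(p,q)=G$ iff $g=pq\,G+Q$ uniquely with $G$ containing only variables present in $p,q$ and $Q$ having no monomial divisible by $pq$ that contains only variables present in $p,q$. $\mathrm{maxrank}(M_g)=\max_{S:Y\cup Z\to\mathbb{F}}\mathrm{rank}(M_g|_S)$, where $M_g|_S$ evaluates entries at $S$. *)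

theory Defs
  imports Main "HOL.Vector_Spaces" "HOL-Library.Poly_Mapping" "HOL-Library.Function_Algebras"
begin

type_synonym ('v, 'a) mpoly = "('v \<Rightarrow>\<^sub>0 nat) \<Rightarrow>\<^sub>0 'a"

definition Var :: "'v \<Rightarrow> ('v, 'a::comm_ring_1) mpoly" where
  "Var v = Poly_Mapping.single (Poly_Mapping.single v 1) 1"

definition vars :: "('v, 'a::zero) mpoly \<Rightarrow> 'v set" where
  "vars p = (\<Union>m\<in>Poly_Mapping.keys p. Poly_Mapping.keys m)"

definition peval :: "('v \<Rightarrow> 'a) \<Rightarrow> ('v, 'a::comm_ring_1) mpoly \<Rightarrow> 'a" where
  "peval \<sigma> p = (\<Sum>m\<in>Poly_Mapping.keys p. Poly_Mapping.lookup p m * (\<Prod>v\<in>Poly_Mapping.keys m. \<sigma> v ^ Poly_Mapping.lookup m v))"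

definition rmon :: "('v \<Rightarrow> 'w) \<Rightarrow> ('v \<Rightarrow>\<^sub>0 nat) \<Rightarrow> ('w \<Rightarrow>\<^sub>0 nat)" where
  "rmon B m = (\<Sum>v\<in>Poly_Mapping.keys m. Poly_Mapping.single (B v) (Poly_Mapping.lookup m v))"

definition ren :: "('v \<Rightarrow> 'w) \<Rightarrow> ('v, 'a::comm_ring_1) mpoly \<Rightarrow> ('w, 'a) mpoly" where
  "ren B p = (\<Sum>m\<in>Poly_Mapping.keys p. Poly_Mapping.single (rmon B m) (Poly_Mapping.lookup p m))"

text \<open>The variable set X: x^i_{jk} is represented by (i,j,k), with i in [d], j,k in [n].\<close>
definition Xset :: "nat \<Rightarrow> nat \<Rightarrow> (nat \<times> nat \<times> nat) set" where
  "Xset n d = {(i,j,k). i \<in> {1..d} \<and> j \<in> {1..n} \<and> k \<in> {1..n}}"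

fun prod_entry :: "nat \<Rightarrow> nat \<Rightarrow> nat \<Rightarrow> nat \<Rightarrow> (nat \<times> nat \<times> nat, 'a::comm_ring_1) mpoly" where
  "prod_entry n 0 j k = (if j = k then 1 else 0)"
| "prod_entry n (Suc m) j k = (\<Sum>l\<in>{1..n}. prod_entry n m j l * Var (Suc m, l, k))"

definition fpoly :: "nat \<Rightarrow> nat \<Rightarrow> (nat \<times> nat \<times> nat, 'a::comm_ring_1) mpoly" where
  "fpoly n d = prod_entry n d 1 1"

definition mlmono :: "'v set \<Rightarrow> ('v, 'a::comm_ring_1) mpoly" where
  "mlmono U = (\<Prod>v\<in>U. Var v)"

text \<open>Entry M_g(p,q) for p = mlmono S (S a finite subset of Y), q = mlmono T (T a finite subset of Z):
  the unique G with g = pq G + Q, G only in variables of p,q, and Q having no monomial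
  divisible by pq that contains only variables of p,q.\<close>
definition coeff_entry :: "('v, 'a::comm_ring_1) mpoly \<Rightarrow> 'v set \<Rightarrow> 'v set \<Rightarrow> ('v, 'a) mpoly" where
  "coeff_entry g S T = (THE G. \<exists>Q. g = mlmono S * mlmono T * G + Q \<and> vars G \<subseteq> S \<union> T \<and>
      (\<forall>m\<in>Poly_Mapping.keys Q. \<not> (Poly_Mapping.keys m \<subseteq> S \<union> T \<and> (\<forall>v\<in>S \<union> T. 0 < Poly_Mapping.lookup m v))))"

text \<open>Rank of a matrix N with rows indexed by the finite subsets of Y and columns by the finite
  subsets of Z: dimension of its column space, in the vector space of functions
  (row index \<Rightarrow> field), columns extended by 0 outside the row index set.\<close>
definition mrank :: "'v set \<Rightarrow> 'v set \<Rightarrow> ('v set \<Rightarrow> 'v set \<Rightarrow> 'a::field) \<Rightarrow> nat" where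
  "mrank Y Z N = vector_space.dim (\<lambda>c u. \<lambda>x. c * u x)
     ((\<lambda>T. \<lambda>S. if finite S \<and> S \<subseteq> Y then N S T else 0) ` {T. finite T \<and> T \<subseteq> Z})"

definition maxrank :: "'v set \<Rightarrow> 'v set \<Rightarrow> ('v, 'a::field) mpoly \<Rightarrow> nat" where
  "maxrank Y Z g = Max {mrank Y Z (\<lambda>S T. peval \<sigma> (coeff_entry g S T)) | \<sigma>. True}"

end

theory Submission
  imports Defs "HOL-Library.FuncSet" "HOL-Library.Indicator_Function"
begin

text \<open>Expanding the matrix product, f is the sum of the monomials
  x^1_{1 l_1} x^2_{l_1 l_2} \<dots> x^d_{l_{d-1} 1}, one for each path l = (1, l_1, \<dots>, l_{d-1}, 1);
  in particular f is multilinear with 0/1 coefficients, so every entry of M_f is a constant.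
  Put the variables of the odd-numbered matrices into Y and those of the even-numbered ones into Z.
  A path is already determined by its Y-variables, and also by its Z-variables, because every
  index l_t occurs in one variable of an odd and in one of an even layer. Hence M_f is a partial
  permutation matrix with one 1 per path, and its rank is the number n^(d-1) of paths.\<close>

definition indicator_mono :: "'v set \<Rightarrow> 'v \<Rightarrow>\<^sub>0 nat" where
  "indicator_mono U = (\<Sum>v\<in>U. Poly_Mapping.single v 1)"

lemma lookup_indicator_mono:
  "finite U \<Longrightarrow> Poly_Mapping.lookup (indicator_mono U) v = (if v \<in> U then 1 else 0)"
  unfolding indicator_mono_def lookup_sum lookup_single by (simp add: when_def)

lemma keys_indicator_mono: "finite U \<Longrightarrow> Poly_Mapping.keys (indicator_mono U) = U"
  by (simp add: set_eq_iff in_keys_iff lookup_indicator_mono)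

lemma indicator_mono_eq_iff:
  "finite U \<Longrightarrow> finite V \<Longrightarrow> indicator_mono U = indicator_mono V \<longleftrightarrow> U = V"
  by (metis keys_indicator_mono)

lemma indicator_mono_insert:
  "finite U \<Longrightarrow> v \<notin> U \<Longrightarrow> indicator_mono (insert v U) = Poly_Mapping.single v 1 + indicator_mono U"
  unfolding indicator_mono_def by simp

lemma indicator_mono_Un:
  "finite U \<Longrightarrow> finite V \<Longrightarrow> U \<inter> V = {} \<Longrightarrow> indicator_mono (U \<union> V) = indicator_mono U + indicator_mono V"
  unfolding indicator_mono_def by (simp add: sum.union_disjoint)

lemma mlmono_eq_single:
  "finite U \<Longrightarrow> mlmono U = (Poly_Mapping.single (indicator_mono U) 1 :: ('v, 'a::comm_ring_1) mpoly)"
  by (induction U rule: finite_induct)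
    (simp_all add: mlmono_def indicator_mono_def indicator_mono_insert Var_def mult_single)

lemma sum_single_lookup: "(\<Sum>k\<in>Poly_Mapping.keys p. Poly_Mapping.single k (Poly_Mapping.lookup p k)) = p"
proof (rule poly_mapping_eqI)
  fix x
  show "Poly_Mapping.lookup (\<Sum>k\<in>Poly_Mapping.keys p. Poly_Mapping.single k (Poly_Mapping.lookup p k)) x
      = Poly_Mapping.lookup p x"
    unfolding lookup_sum lookup_single by (cases "x \<in> Poly_Mapping.keys p") (auto simp: when_def in_keys_iff)
qed

lemma ren_id:
  fixes p :: "('v, 'a::comm_ring_1) mpoly"
  shows "ren id p = p"
proof -
  have "rmon id m = m" for m :: "'v \<Rightarrow>\<^sub>0 nat"
    unfolding rmon_def using sum_single_lookup[of m] by simp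
  then show ?thesis
    unfolding ren_def using sum_single_lookup[of p] by simp
qed

lemma peval_single_0: "peval \<sigma> (Poly_Mapping.single 0 c) = c"
  by (cases "c = 0") (auto simp: peval_def)

lemma lookup_single_mult_add:
  fixes G :: "('v, 'a::comm_ring_1) mpoly"
  shows "Poly_Mapping.lookup (Poly_Mapping.single a 1 * G) (a + m) = Poly_Mapping.lookup G m"
proof -
  have "Poly_Mapping.single a 1 * G
      = (\<Sum>k\<in>Poly_Mapping.keys G. Poly_Mapping.single (a + k) (Poly_Mapping.lookup G k))"
    by (subst (1) sum_single_lookup[of G, symmetric]) (simp add: sum_distrib_left mult_single)
  then have "Poly_Mapping.lookup (Poly_Mapping.single a 1 * G) (a + m)
      = (\<Sum>k\<in>Poly_Mapping.keys G. if k = m then Poly_Mapping.lookup G k else 0)"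
    by (simp add: lookup_sum lookup_single when_def)
  also have "\<dots> = Poly_Mapping.lookup G m"
    by (cases "m \<in> Poly_Mapping.keys G") (auto simp: in_keys_iff)
  finally show ?thesis .
qed

definition coeff_entry_decomp :: "('v, 'a::comm_ring_1) mpoly \<Rightarrow> 'v set \<Rightarrow> 'v set \<Rightarrow> ('v, 'a) mpoly \<Rightarrow> bool" where
  "coeff_entry_decomp g S T G \<longleftrightarrow> (\<exists>Q. g = mlmono S * mlmono T * G + Q \<and> vars G \<subseteq> S \<union> T \<and>
      (\<forall>m\<in>Poly_Mapping.keys Q. \<not> (Poly_Mapping.keys m \<subseteq> S \<union> T \<and> (\<forall>v\<in>S \<union> T. 0 < Poly_Mapping.lookup m v))))"

lemma coeff_entry_eq_The: "coeff_entry g S T = (THE G. coeff_entry_decomp g S T G)"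
  unfolding coeff_entry_def coeff_entry_decomp_def ..

lemma coeff_entry_decomp_iff:
  fixes g :: "('v, 'a::comm_ring_1) mpoly"
  assumes "finite S" "finite T" "S \<inter> T = {}"
  shows "coeff_entry_decomp g S T G \<longleftrightarrow>
    (\<exists>Q. g = Poly_Mapping.single (indicator_mono (S \<union> T)) 1 * G + Q \<and> vars G \<subseteq> S \<union> T \<and>
       (\<forall>m\<in>Poly_Mapping.keys Q. Poly_Mapping.keys m \<noteq> S \<union> T))"
proof -
  have "mlmono S * mlmono T = (Poly_Mapping.single (indicator_mono (S \<union> T)) 1 :: ('v, 'a) mpoly)"
    using assms by (simp add: mlmono_eq_single mult_single indicator_mono_Un)
  moreover have "(Poly_Mapping.keys m \<subseteq> U \<and> (\<forall>v\<in>U. 0 < Poly_Mapping.lookup m v))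
      \<longleftrightarrow> Poly_Mapping.keys m = U" for m :: "'v \<Rightarrow>\<^sub>0 nat" and U
    by (auto simp: in_keys_iff)
  ultimately show ?thesis
    unfolding coeff_entry_decomp_def by simp
qed

definition multilinear :: "('v, 'a::zero) mpoly \<Rightarrow> bool" where
  "multilinear g \<longleftrightarrow> (\<forall>m\<in>Poly_Mapping.keys g. \<forall>v. Poly_Mapping.lookup m v \<le> 1)"

lemma multilinear_keys_eq_indicator_mono:
  assumes "multilinear g" "m \<in> Poly_Mapping.keys g" "finite U" "Poly_Mapping.keys m = U"
  shows "m = indicator_mono U"
proof (rule poly_mapping_eqI)
  fix v
  show "Poly_Mapping.lookup m v = Poly_Mapping.lookup (indicator_mono U) v"
  proof -
    have "Poly_Mapping.lookup m v \<le> 1" using assms(1,2) by (simp add: multilinear_def)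
    then show ?thesis
      using assms(3,4) by (cases "v \<in> U") (auto simp: lookup_indicator_mono in_keys_iff)
  qed
qed

lemma multilinear_lookup_indicator_mono_add:
  assumes "multilinear g" "finite U" "Poly_Mapping.keys m \<subseteq> U" "m \<noteq> 0"
  shows "Poly_Mapping.lookup g (indicator_mono U + m) = 0"
proof -
  obtain v where v: "v \<in> Poly_Mapping.keys m" using \<open>m \<noteq> 0\<close> by fastforce
  then have "v \<in> U" using assms(3) by blast
  then have "Poly_Mapping.lookup (indicator_mono U + m) v \<ge> 2"
    using v \<open>finite U\<close> by (auto simp: lookup_add lookup_indicator_mono in_keys_iff)
  show ?thesis
  proof (rule ccontr)
    assume "Poly_Mapping.lookup g (indicator_mono U + m) \<noteq> 0"
    then have "Poly_Mapping.lookup (indicator_mono U + m) v \<le> 1"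
      using \<open>multilinear g\<close> by (simp add: multilinear_def in_keys_iff)
    with \<open>Poly_Mapping.lookup (indicator_mono U + m) v \<ge> 2\<close> show False by simp
  qed
qed

text \<open>For a multilinear g, a monomial whose variables are exactly those of pq and which is
  divisible by pq must be pq itself; so the entry M_g(p,q) is the constant coefficient of pq in g.\<close>

lemma coeff_entry_multilinear:
  assumes "multilinear g" and "finite S" "finite T" "S \<inter> T = {}"
  shows "coeff_entry g S T = Poly_Mapping.single 0 (Poly_Mapping.lookup g (indicator_mono (S \<union> T)))"
proof -
  define U where "U = S \<union> T"
  define a where "a = indicator_mono U"
  define c where "c = Poly_Mapping.lookup g a"
  have "finite U" using assms U_def by auto
  note decomp = coeff_entry_decomp_iff[OF assms(2-4), folded U_def a_def]
  have "coeff_entry_decomp g S T (Poly_Mapping.single 0 c)"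
    unfolding decomp
  proof (intro exI conjI ballI)
    show "g = Poly_Mapping.single a 1 * Poly_Mapping.single 0 c + (g - Poly_Mapping.single a c)"
      by (simp add: mult_single)
    show "vars (Poly_Mapping.single 0 c) \<subseteq> U"
      by (simp add: vars_def)
    fix m assume "m \<in> Poly_Mapping.keys (g - Poly_Mapping.single a c)"
    then have "m \<in> Poly_Mapping.keys g" "m \<noteq> a"
      by (auto simp: in_keys_iff lookup_minus lookup_single c_def when_def split: if_splits)
    then show "Poly_Mapping.keys m \<noteq> U"
      using multilinear_keys_eq_indicator_mono[OF assms(1) _ \<open>finite U\<close>] a_def by blast
  qed
  moreover have "G = Poly_Mapping.single 0 c" if G: "coeff_entry_decomp g S T G" for G
  proof (rule poly_mapping_eqI)
    obtain Q where g: "g = Poly_Mapping.single a 1 * G + Q" and "vars G \<subseteq> U"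
      and Q: "\<forall>m\<in>Poly_Mapping.keys Q. Poly_Mapping.keys m \<noteq> U"
      using G unfolding decomp by blast
    fix m
    show "Poly_Mapping.lookup G m = Poly_Mapping.lookup (Poly_Mapping.single 0 c) m"
    proof (cases "Poly_Mapping.keys m \<subseteq> U")
      case False
      then have "m \<notin> Poly_Mapping.keys G" "m \<noteq> 0"
        using \<open>vars G \<subseteq> U\<close> by (auto simp: vars_def)
      then show ?thesis by (simp add: in_keys_iff lookup_single)
    next
      case True
      have "Poly_Mapping.keys (a + m) = Poly_Mapping.keys a \<union> Poly_Mapping.keys m"
        by (auto simp: in_keys_iff lookup_add)
      then have "Poly_Mapping.keys (a + m) = U"
        using True \<open>finite U\<close> by (auto simp: a_def keys_indicator_mono)
      then have "Poly_Mapping.lookup g (a + m) = Poly_Mapping.lookup G m"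
        using g Q by (auto simp: lookup_add lookup_single_mult_add in_keys_iff)
      then show ?thesis
        using multilinear_lookup_indicator_mono_add[OF assms(1) \<open>finite U\<close> True]
        by (cases "m = 0") (simp_all add: a_def c_def lookup_single)
    qed
  qed
  ultimately have "coeff_entry g S T = Poly_Mapping.single 0 c"
    unfolding coeff_entry_eq_The by (rule the_equality)
  then show ?thesis by (simp add: c_def a_def U_def)
qed

lemma fun_sum_apply: "(\<Sum>a\<in>A. f a) x = (\<Sum>a\<in>A. f a x)"
  by (induction A rule: infinite_finite_induct) auto

interpretation fun_space: vector_space "(\<lambda>c u. \<lambda>x. c * u x) :: 'a::field \<Rightarrow> ('b \<Rightarrow> 'a) \<Rightarrow> 'b \<Rightarrow> 'a"
  by unfold_locales (auto simp: fun_eq_iff algebra_simps)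

lemma independent_indicator_singletons:
  "fun_space.independent ((\<lambda>x. indicator {x} :: 'b \<Rightarrow> 'a::field) ` A)"
  unfolding fun_space.independent_explicit_module
proof (intro allI impI)
  fix t u v
  assume t: "finite t" "t \<subseteq> (\<lambda>x. indicator {x}) ` A"
    and sum: "(\<Sum>w\<in>t. (\<lambda>y. u w * w y)) = (0 :: 'b \<Rightarrow> 'a)" and "v \<in> t"
  then obtain x where v: "v = indicator {x}" by blast
  have "u w * w x = (if w = v then u w else 0)" if "w \<in> t" for w
    using that t(2) v by (auto simp: indicator_def)
  then have "(\<Sum>w\<in>t. u w * w x) = u v"
    using t(1) \<open>v \<in> t\<close> by (simp cong: sum.cong)
  moreover have "(\<Sum>w\<in>t. u w * w x) = 0"
    using fun_cong[OF sum, of x] by (simp add: fun_sum_apply)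
  ultimately show "u v = 0" by simp
qed

lemma mrank_partial_permutation:
  fixes N :: "'v set \<Rightarrow> 'v set \<Rightarrow> 'a::field"
  assumes "finite P" and "inj_on r P" and inj_c: "inj_on c P"
    and rows: "\<And>p. p \<in> P \<Longrightarrow> finite (r p) \<and> r p \<subseteq> Y"
    and cols: "\<And>p. p \<in> P \<Longrightarrow> finite (c p) \<and> c p \<subseteq> Z"
    and N: "\<And>S T. finite S \<Longrightarrow> S \<subseteq> Y \<Longrightarrow> finite T \<Longrightarrow> T \<subseteq> Z \<Longrightarrow>
              N S T = (if \<exists>p\<in>P. r p = S \<and> c p = T then 1 else 0)"
  shows "mrank Y Z N = card P"
proof -
  define col where "col T = (\<lambda>S. if finite S \<and> S \<subseteq> Y then N S T else 0)" for T
  define units where "units = (\<lambda>R. indicator {R} :: 'v set \<Rightarrow> 'a) ` r ` P"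
  have col_c: "col (c p) = indicator {r p}" if "p \<in> P" for p
  proof
    fix S
    have "(\<exists>q\<in>P. r q = S \<and> c q = c p) \<longleftrightarrow> S = r p"
      using inj_c that by (auto dest: inj_onD)
    then show "col (c p) S = indicator {r p} S"
      using N[of S "c p"] rows[OF that] cols[OF that] by (auto simp: col_def)
  qed
  have col_0: "col T = 0" if "finite T" "T \<subseteq> Z" "T \<notin> c ` P" for T
    using N[of _ T] that by (auto simp: col_def fun_eq_iff)
  have cols_in_units: "col ` {T. finite T \<and> T \<subseteq> Z} \<subseteq> insert 0 units"
  proof (rule image_subsetI)
    fix T assume "T \<in> {T. finite T \<and> T \<subseteq> Z}"
    then show "col T \<in> insert 0 units"
      using col_c col_0[of T] by (cases "T \<in> c ` P") (auto simp: units_def)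
  qed
  have units_in_cols: "units \<subseteq> col ` {T. finite T \<and> T \<subseteq> Z}"
    using col_c cols by (force simp: units_def)
  have span_eq: "fun_space.span (col ` {T. finite T \<and> T \<subseteq> Z}) = fun_space.span units"
    using fun_space.span_mono[OF cols_in_units] fun_space.span_mono[OF units_in_cols]
    by (simp add: subset_antisym)
  have "mrank Y Z N = fun_space.dim (col ` {T. finite T \<and> T \<subseteq> Z})"
    unfolding mrank_def col_def ..
  also have "\<dots> = fun_space.dim units"
    by (subst (1 2) fun_space.dim_span[symmetric]) (simp only: span_eq)
  also have "\<dots> = card units"
    unfolding units_def by (rule fun_space.dim_eq_card_independent[OF independent_indicator_singletons])
  also have "\<dots> = card P"
    unfolding units_def using \<open>inj_on r P\<close>
    by (simp add: card_image inj_on_def indicator_def fun_eq_iff)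
  finally show ?thesis .
qed

text \<open>A path of length m from j to k is stored as a function l with l 0 = j, l m = k,
  inner indices in [n], and zero after m (so that each path has a single representative); it uses the variables
  x^i_{l(i-1) l(i)} for i = 1..m.\<close>

definition paths :: "nat \<Rightarrow> nat \<Rightarrow> nat \<Rightarrow> nat \<Rightarrow> (nat \<Rightarrow> nat) set" where
  "paths n m j k = {l. l 0 = j \<and> l m = k \<and> (\<forall>i. 0 < i \<and> i < m \<longrightarrow> l i \<in> {1..n}) \<and> (\<forall>i>m. l i = 0)}"

definition path_vars :: "nat \<Rightarrow> (nat \<Rightarrow> nat) \<Rightarrow> (nat \<times> nat \<times> nat) set" where
  "path_vars m l = (\<lambda>i. (i, l (i - 1), l i)) ` {1..m}"

lemma finite_path_vars [simp]: "finite (path_vars m l)"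
  by (simp add: path_vars_def)

lemma paths_0: "paths n 0 j k = (if j = k then {\<lambda>i. if i = 0 then j else 0} else {})"
  by (auto simp: paths_def fun_eq_iff)

lemma paths_Suc:
  assumes "j \<in> {1..n}"
  shows "paths n (Suc m) j k = (\<lambda>(k', l). l(Suc m := k)) ` (SIGMA k':{1..n}. paths n m j k')"
proof (intro set_eqI iffI)
  fix p assume p: "p \<in> paths n (Suc m) j k"
  have "p m \<in> {1..n}"
    using p assms by (cases m) (auto simp: paths_def)
  moreover have "p(Suc m := 0) \<in> paths n m j (p m)" "p = (p(Suc m := 0))(Suc m := k)"
    using p by (auto simp: paths_def)
  ultimately show "p \<in> (\<lambda>(k', l). l(Suc m := k)) ` (SIGMA k':{1..n}. paths n m j k')"
    by (auto intro!: image_eqI[where x="(p m, p(Suc m := 0))"])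
qed (auto simp: paths_def less_Suc_eq)

lemma inj_on_extend_paths:
  "inj_on (\<lambda>(k', l). l(Suc m := k)) (SIGMA k':{1..n}. paths n m j k')"
proof (rule inj_onI, clarify)
  fix k1 l1 k2 l2
  assume "k1 \<in> {1..n}" "l1 \<in> paths n m j k1" "k2 \<in> {1..n}" "l2 \<in> paths n m j k2"
    and eq: "l1(Suc m := k) = l2(Suc m := k)"
  moreover have "l1 = l2"
  proof
    fix i
    show "l1 i = l2 i"
      using fun_cong[OF eq, of i] \<open>l1 \<in> paths n m j k1\<close> \<open>l2 \<in> paths n m j k2\<close>
      by (cases "i = Suc m") (auto simp: paths_def)
  qed
  ultimately show "k1 = k2 \<and> l1 = l2" by (auto simp: paths_def)
qed

lemma finite_paths: "j \<in> {1..n} \<Longrightarrow> finite (paths n m j k)"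
  by (induction m arbitrary: k) (simp_all add: paths_0 paths_Suc)

lemma path_vars_extend:
  assumes "l \<in> paths n m j k'"
  shows "path_vars (Suc m) (l(Suc m := k)) = insert (Suc m, k', k) (path_vars m l)"
proof -
  have "path_vars (Suc m) (l(Suc m := k))
      = insert (Suc m, l m, k) ((\<lambda>i. (i, (l(Suc m := k)) (i - 1), (l(Suc m := k)) i)) ` {1..m})"
    unfolding path_vars_def by (simp add: atLeastAtMostSuc_conv)
  also have "(\<lambda>i. (i, (l(Suc m := k)) (i - 1), (l(Suc m := k)) i)) ` {1..m} = path_vars m l"
    unfolding path_vars_def by (rule image_cong) auto
  finally have "path_vars (Suc m) (l(Suc m := k)) = insert (Suc m, l m, k) (path_vars m l)" .
  with assms show ?thesis by (simp add: paths_def)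
qed

lemma prod_entry_eq_sum_paths:
  assumes "j \<in> {1..n}"
  shows "(prod_entry n m j k :: (nat \<times> nat \<times> nat, 'a::comm_ring_1) mpoly)
     = (\<Sum>l\<in>paths n m j k. Poly_Mapping.single (indicator_mono (path_vars m l)) 1)"
proof (induction m arbitrary: k)
  case 0
  then show ?case by (simp add: paths_0 path_vars_def indicator_mono_def)
next
  case (Suc m)
  have new_var: "(Suc m, k', k) \<notin> path_vars m l" for k' l
    by (auto simp: path_vars_def)
  have "(\<Sum>l\<in>paths n (Suc m) j k. Poly_Mapping.single (indicator_mono (path_vars (Suc m) l)) (1::'a))
     = (\<Sum>k'\<in>{1..n}. \<Sum>l\<in>paths n m j k'.
          Poly_Mapping.single (indicator_mono (path_vars (Suc m) (l(Suc m := k)))) 1)"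
    unfolding paths_Suc[OF assms] sum.reindex[OF inj_on_extend_paths]
    by (simp add: sum.Sigma finite_paths[OF assms] split_def)
  also have "\<dots> = (\<Sum>k'\<in>{1..n}. \<Sum>l\<in>paths n m j k'.
          Poly_Mapping.single (indicator_mono (path_vars m l)) 1 * Var (Suc m, k', k))"
    by (intro sum.cong refl)
      (simp add: path_vars_extend indicator_mono_insert new_var Var_def mult_single add.commute)
  also have "\<dots> = prod_entry n (Suc m) j k"
    by (simp add: Suc sum_distrib_right)
  finally show ?case by simp
qed

lemma card_paths:
  assumes "m \<ge> 1"
  shows "card (paths n m j k) = n ^ (m - 1)"
proof -
  have "bij_betw (\<lambda>l. restrict l {1..<m}) (paths n m j k) (PiE {1..<m} (\<lambda>_. {1..n}))"
  proof (rule bij_betw_imageI)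
    show "inj_on (\<lambda>l. restrict l {1..<m}) (paths n m j k)"
    proof (rule inj_onI, rule ext)
      fix l l' i
      assume "l \<in> paths n m j k" "l' \<in> paths n m j k" and eq: "restrict l {1..<m} = restrict l' {1..<m}"
      then show "l i = l' i"
      proof (cases "0 < i \<and> i < m")
        case True
        then show ?thesis using fun_cong[OF eq, of i] by simp
      qed (auto simp: paths_def not_less_iff_gr_or_eq)
    qed
    show "(\<lambda>l. restrict l {1..<m}) ` paths n m j k = PiE {1..<m} (\<lambda>_. {1..n})"
    proof (intro set_eqI iffI)
      fix f assume f: "f \<in> PiE {1..<m} (\<lambda>_. {1..n})"
      define l where "l i = (if i = 0 then j else if i = m then k else if i < m then f i else 0)" for i
      have "l \<in> paths n m j k" using f assms by (auto simp: paths_def l_def)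
      moreover have "restrict l {1..<m} = f"
        using f by (auto simp: l_def PiE_def extensional_def)
      ultimately show "f \<in> (\<lambda>l. restrict l {1..<m}) ` paths n m j k" by blast
    qed (auto simp: paths_def)
  qed
  then show ?thesis by (simp add: bij_betw_same_card card_PiE)
qed

text \<open>Every inner index l t (0 < t < m) occurs in the variables of layers t and t + 1, so a path is
  recovered from its variables in any set of layers containing one of every two consecutive ones.\<close>

lemma inj_on_path_vars_layers:
  assumes cover: "\<And>t. 0 < t \<Longrightarrow> t < m \<Longrightarrow> Q t \<or> Q (Suc t)"
  shows "inj_on (\<lambda>l. path_vars m l \<inter> {x. Q (fst x)}) (paths n m j k)"
proof (rule inj_onI, rule ext)
  fix l l' t
  assume l: "l \<in> paths n m j k" and l': "l' \<in> paths n m j k"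
    and eq: "path_vars m l \<inter> {x. Q (fst x)} = path_vars m l' \<inter> {x. Q (fst x)}"
  have layer: "(i, l (i - 1), l i) \<in> path_vars m l'" if "Q i" "1 \<le> i" "i \<le> m" for i
  proof -
    have "(i, l (i - 1), l i) \<in> path_vars m l \<inter> {x. Q (fst x)}"
      using that by (auto simp: path_vars_def)
    then show ?thesis using eq by blast
  qed
  show "l t = l' t"
  proof (cases "0 < t \<and> t < m")
    case True
    with cover consider "Q t" | "Q (Suc t)" by blast
    then show ?thesis
    proof cases
      case 1
      then show ?thesis using layer[of t] True by (auto simp: path_vars_def)
    next
      case 2
      then show ?thesis using layer[of "Suc t"] True by (auto simp: path_vars_def)
    qed
  next
    case False
    then show ?thesis using l l' by (auto simp: paths_def not_less_iff_gr_or_eq)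
  qed
qed

lemma path_vars_subset_Xset:
  assumes "l \<in> paths n d 1 1" "n \<ge> 1"
  shows "path_vars d l \<subseteq> Xset n d"
proof -
  have "l i \<in> {1..n}" if "i \<le> d" for i
    using assms that by (cases "i = 0 \<or> i = d") (auto simp: paths_def)
  then show ?thesis by (auto simp: path_vars_def Xset_def)
qed

lemma fpoly_eq_sum_paths:
  "n \<ge> 1 \<Longrightarrow> (fpoly n d :: (nat \<times> nat \<times> nat, 'a::comm_ring_1) mpoly)
     = (\<Sum>l\<in>paths n d 1 1. Poly_Mapping.single (indicator_mono (path_vars d l)) 1)"
  unfolding fpoly_def by (rule prod_entry_eq_sum_paths) auto

lemma multilinear_fpoly:
  assumes "n \<ge> 1"
  shows "multilinear (fpoly n d :: (nat \<times> nat \<times> nat, 'a::comm_ring_1) mpoly)"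
  unfolding multilinear_def
proof (intro ballI allI)
  fix m v assume "m \<in> Poly_Mapping.keys (fpoly n d :: (nat \<times> nat \<times> nat, 'a) mpoly)"
  then obtain l where "m \<in> Poly_Mapping.keys (Poly_Mapping.single (indicator_mono (path_vars d l)) (1::'a))"
    using keys_sum[of "\<lambda>l. Poly_Mapping.single (indicator_mono (path_vars d l)) (1::'a)"]
    unfolding fpoly_eq_sum_paths[OF assms] by blast
  then show "Poly_Mapping.lookup m v \<le> 1" by (simp add: lookup_indicator_mono)
qed

lemma lookup_fpoly_indicator_mono:
  assumes "n \<ge> 1" "finite U"
  shows "Poly_Mapping.lookup (fpoly n d :: (nat \<times> nat \<times> nat, 'a::comm_ring_1) mpoly) (indicator_mono U)
     = (if U \<in> path_vars d ` paths n d 1 1 then 1 else 0)"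
proof -
  have inj: "inj_on (path_vars d) (paths n d 1 1)"
    using inj_on_path_vars_layers[of d "\<lambda>_. True" n 1 1] by simp
  have "Poly_Mapping.lookup (fpoly n d :: (nat \<times> nat \<times> nat, 'a) mpoly) (indicator_mono U)
     = (\<Sum>l\<in>paths n d 1 1. if path_vars d l = U then 1 else 0)"
    unfolding fpoly_eq_sum_paths[OF assms(1)] lookup_sum lookup_single
    using indicator_mono_eq_iff[OF finite_path_vars assms(2)] by (simp add: when_def)
  also have "\<dots> = (\<Sum>V\<in>path_vars d ` paths n d 1 1. if V = U then 1 else 0)"
    using sum.reindex[OF inj, of "\<lambda>V. if V = U then (1::'a) else 0"] by (simp add: comp_def)
  also have "\<dots> = (if U \<in> path_vars d ` paths n d 1 1 then 1 else 0)"
    using finite_paths[of 1 n d 1] assms(1) by simp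
  finally show ?thesis .
qed

lemma coeff_entry_fpoly:
  assumes "n \<ge> 1" "finite S" "finite T" "S \<inter> T = {}"
  shows "coeff_entry (fpoly n d :: (nat \<times> nat \<times> nat, 'a::comm_ring_1) mpoly) S T
    = Poly_Mapping.single 0 (if S \<union> T \<in> path_vars d ` paths n d 1 1 then 1 else 0)"
proof -
  have "coeff_entry (fpoly n d :: (nat \<times> nat \<times> nat, 'a) mpoly) S T
      = Poly_Mapping.single 0 (Poly_Mapping.lookup (fpoly n d) (indicator_mono (S \<union> T)))"
    by (rule coeff_entry_multilinear[OF multilinear_fpoly[OF assms(1)] assms(2-4)])
  also have "\<dots> = Poly_Mapping.single 0 (if S \<union> T \<in> path_vars d ` paths n d 1 1 then 1 else 0)"
    by (subst lookup_fpoly_indicator_mono[OF assms(1)]) (use assms(2,3) in auto)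
  finally show ?thesis .
qed

lemma mrank_fpoly_layers:
  fixes \<sigma> :: "nat \<times> nat \<times> nat \<Rightarrow> 'a::field"
  assumes "n \<ge> 1" "d \<ge> 1"
  defines "Y \<equiv> Xset n d \<inter> {x. odd (fst x)}" and "Z \<equiv> Xset n d \<inter> {x. even (fst x)}"
  shows "mrank Y Z (\<lambda>S T. peval \<sigma> (coeff_entry (fpoly n d :: (nat \<times> nat \<times> nat, 'a) mpoly) S T))
    = n ^ (d - 1)"
proof -
  let ?P = "paths n d 1 1"
  have vars_YZ: "path_vars d l \<subseteq> Y \<union> Z" if "l \<in> ?P" for l
    using path_vars_subset_Xset[OF that assms(1)] by (auto simp: Y_def Z_def)
  have vars_Y: "path_vars d l \<inter> Y = path_vars d l \<inter> {x. odd (fst x)}"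
    and vars_Z: "path_vars d l \<inter> Z = path_vars d l \<inter> {x. even (fst x)}" if "l \<in> ?P" for l
    using path_vars_subset_Xset[OF that assms(1)] by (auto simp: Y_def Z_def)
  have "mrank Y Z (\<lambda>S T. peval \<sigma> (coeff_entry (fpoly n d :: (nat \<times> nat \<times> nat, 'a) mpoly) S T))
      = card ?P"
  proof (rule mrank_partial_permutation)
    show "finite ?P" using finite_paths[of 1 n d 1] assms(1) by simp
    show "inj_on (\<lambda>l. path_vars d l \<inter> Y) ?P"
      by (subst inj_on_cong[OF vars_Y]) (auto intro: inj_on_path_vars_layers)
    show "inj_on (\<lambda>l. path_vars d l \<inter> Z) ?P"
      by (subst inj_on_cong[OF vars_Z]) (auto intro: inj_on_path_vars_layers)
    fix S T :: "(nat \<times> nat \<times> nat) set"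
    assume S: "finite S" "S \<subseteq> Y" and T: "finite T" "T \<subseteq> Z"
    have "Y \<inter> Z = {}" by (auto simp: Y_def Z_def)
    then have "S \<inter> T = {}" using S T by blast
    have split: "path_vars d l = S \<union> T \<longleftrightarrow> path_vars d l \<inter> Y = S \<and> path_vars d l \<inter> Z = T"
      if "l \<in> ?P" for l
      using vars_YZ[OF that] S T \<open>Y \<inter> Z = {}\<close> by blast
    note coeff_entry_fpoly[OF assms(1) S(1) T(1) \<open>S \<inter> T = {}\<close>, where 'a='a]
    moreover have "S \<union> T \<in> path_vars d ` ?P \<longleftrightarrow> (\<exists>l\<in>?P. path_vars d l \<inter> Y = S \<and> path_vars d l \<inter> Z = T)"
      unfolding image_iff by (intro bex_cong refl) (simp add: split eq_commute[of "S \<union> T"])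
    ultimately show "peval \<sigma> (coeff_entry (fpoly n d) S T)
        = (if \<exists>l\<in>?P. path_vars d l \<inter> Y = S \<and> path_vars d l \<inter> Z = T then 1 else 0)"
      by (simp add: peval_single_0)
  qed (auto simp: Y_def Z_def)
  also have "\<dots> = n ^ (d - 1)"
    using assms(2) by (rule card_paths)
  finally show ?thesis .
qed

theorem lemma2:
  fixes n d :: nat
  assumes "n \<ge> 1" and "d \<ge> 1"
  shows "\<exists>(B :: nat \<times> nat \<times> nat \<Rightarrow> nat \<times> nat \<times> nat) Y Z.
           Y \<inter> Z = {} \<and> bij_betw B (Xset n d) (Y \<union> Z) \<and>
           maxrank Y Z (ren B (fpoly n d :: (nat \<times> nat \<times> nat, 'a::field) mpoly)) = n ^ (d - 1)"
proof (intro exI conjI)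
  let ?Y = "Xset n d \<inter> {x. odd (fst x)}" and ?Z = "Xset n d \<inter> {x. even (fst x)}"
  show "?Y \<inter> ?Z = {}" by auto
  have "?Y \<union> ?Z = Xset n d" by auto
  then show "bij_betw id (Xset n d) (?Y \<union> ?Z)" by simp
  have "{mrank ?Y ?Z (\<lambda>S T. peval \<sigma> (coeff_entry (fpoly n d :: (nat \<times> nat \<times> nat, 'a) mpoly) S T)) | \<sigma>. True}
      = {n ^ (d - 1)}"
    using mrank_fpoly_layers[OF assms] by auto
  then show "maxrank ?Y ?Z (ren id (fpoly n d :: (nat \<times> nat \<times> nat, 'a) mpoly)) = n ^ (d - 1)"
    unfolding maxrank_def ren_id by simp
qed

end
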